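(* Let $f:\mathbb{R}^\ell\times\mathbb{R}^m\to\mathbb{R}^\ell$ be $C^1$, let $\Lambda$ be a parameter shift with limits $\lambda_\pm$, and let $X$ define a stable path. Let $N\in\mathbb{N}$ be such that $\|[D_xf(X(s),\Lambda(s))]^n\|<\frac14$ for all $s\in\mathbb{R}$ and $n\ge N$. Then for $\epsilon>0$ and $r>0$ sufficiently small, the graph transforms $G_n:S\to S$ are well defined and satisfy $$\|G_nu-G_nu'\|_\infty\le\tfrac12\|u-u'\|_\infty$$ for all $u,u'\in S$ and all $n\in\{N,N+1,\ldots,N(N+1)\}$.
   Context: A parameter shift is a $C^1$ function $\Lambda:\mathbb{R}\to\mathbb{R}^m$ with $\lim_{s\to\pm\infty}\Lambda(s)=\lambda_\pm$ and $\lim_{s\to\pm\infty}\Lambda'(s)=0$. A stable path is given by $X:\mathbb{R}\to\mathbb{R}^\ell$ such that: $X(s)$ is a fixed point of $f(\cdot,\Lambda(s))$ for every $s$; $\{(s,X(s))\}$ is a connected curve; the limits $X_\pm=\lim_{s\to\pm\infty}X(s)$ exist and are fixed points of $f(\cdot,\lambda_\pm)$; and the spectral radius of $D_xf(X(s),\Lambda(s))$ is $<1$ for all $s\in\mathbb{R}\cup\{\pm\infty\}$. For $r\ge0$, $F_r(s,x)=(s+r,f(x,\Lambda(s)))$, $F_r^n$ is its $n$-fold composition, and $\pi(s,x)=x$. $\mathcal{N}_\epsilon=\{(s,x):\|x-X(s)\|\le\epsilon\}$ (Euclidean norm). $S$ is the set of functions $u:\mathbb{R}\to\mathbb{R}^\ell$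 with $(s,u(s))\in\mathcal{N}_\epsilon$ for all $s$, with metric from $\|u\|_\infty=\sup_s\|u(s)\|$. The graph transform $G_n$ is defined by $(G_nu)(s+nr)=\pi\circ F_r^n(s,u(s))$ for all $s\in\mathbb{R}$, i.e. $F_r^n$ maps the point $(s,u(s))$ to $(s+nr,(G_nu)(s+nr))$. *)

theory Defs
  imports "HOL-Analysis.Analysis"
begin

definition Dx :: "((real^'l) \<times> (real^'m) \<Rightarrow> ((real^'l) \<times> (real^'m)) \<Rightarrow>\<^sub>L (real^'l))
                   \<Rightarrow> real^'l \<Rightarrow> real^'m \<Rightarrow> real^'l \<Rightarrow> real^'l" where
  "Dx f' x lam = (\<lambda>h. blinfun_apply (f' (x, lam)) (h, 0))"

definition cplx_eigenvalues :: "real^'n^'n \<Rightarrow> complex set" where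
  "cplx_eigenvalues A =
     {z. det (mat z - (\<chi> i j. complex_of_real (A $ i $ j)) :: complex^'n^'n) = 0}"

definition spec_rad :: "real^'n^'n \<Rightarrow> real" where
  "spec_rad A = Max (cmod ` cplx_eigenvalues A)"

definition parameter_shift ::
  "(real \<Rightarrow> real^'m) \<Rightarrow> real^'m \<Rightarrow> real^'m \<Rightarrow> bool" where
  "parameter_shift Lam lm lp \<longleftrightarrow>
     (\<exists>Lam'. (\<forall>s. (Lam has_vector_derivative Lam' s) (at s)) \<and> continuous_on UNIV Lam'
        \<and> (Lam' \<longlongrightarrow> 0) at_bot \<and> (Lam' \<longlongrightarrow> 0) at_top)
     \<and> (Lam \<longlongrightarrow> lm) at_bot \<and> (Lam \<longlongrightarrow> lp) at_top"

definition stable_path ::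
  "((real^'l) \<times> (real^'m) \<Rightarrow> real^'l) \<Rightarrow> ((real^'l) \<times> (real^'m) \<Rightarrow> ((real^'l) \<times> (real^'m)) \<Rightarrow>\<^sub>L (real^'l))
   \<Rightarrow> (real \<Rightarrow> real^'m) \<Rightarrow> real^'m \<Rightarrow> real^'m \<Rightarrow> (real \<Rightarrow> real^'l) \<Rightarrow> bool" where
  "stable_path f f' Lam lm lp X \<longleftrightarrow>
     (\<forall>s. f (X s, Lam s) = X s)
     \<and> connected {(s, X s) | s. True}
     \<and> (\<exists>Xm Xp. (X \<longlongrightarrow> Xm) at_bot \<and> (X \<longlongrightarrow> Xp) at_top
          \<and> f (Xm, lm) = Xm \<and> f (Xp, lp) = Xp
          \<and> spec_rad (matrix (Dx f' Xm lm)) < 1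
          \<and> spec_rad (matrix (Dx f' Xp lp)) < 1)
     \<and> (\<forall>s. spec_rad (matrix (Dx f' (X s) (Lam s))) < 1)"

definition Fr :: "((real^'l) \<times> (real^'m) \<Rightarrow> real^'l) \<Rightarrow> (real \<Rightarrow> real^'m) \<Rightarrow> real
                  \<Rightarrow> real \<times> (real^'l) \<Rightarrow> real \<times> (real^'l)" where
  "Fr f Lam r = (\<lambda>(s, x). (s + r, f (x, Lam s)))"

text \<open>Graph transform: (G_n u)(s + n r) = pi (F_r^n (s, u s)).\<close>
definition graph_transform ::
  "((real^'l) \<times> (real^'m) \<Rightarrow> real^'l) \<Rightarrow> (real \<Rightarrow> real^'m) \<Rightarrow> real \<Rightarrow> nat
   \<Rightarrow> (real \<Rightarrow> real^'l) \<Rightarrow> real \<Rightarrow> real^'l" where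
  "graph_transform f Lam r n u =
     (\<lambda>t. snd ((Fr f Lam r ^^ n) (t - real n * r, u (t - real n * r))))"

definition Sspace :: "real \<Rightarrow> (real \<Rightarrow> real^'l) \<Rightarrow> (real \<Rightarrow> real^'l) set" where
  "Sspace eps X = {u. \<forall>s. norm (u s - X s) \<le> eps}"

definition sup_dist :: "(real \<Rightarrow> real^'l) \<Rightarrow> (real \<Rightarrow> real^'l) \<Rightarrow> real" where
  "sup_dist u v = (SUP s. norm (u s - v s))"

end

theory Submission
  imports Defs
begin

text \<open>
  From the N-th power on, A(s) = D_x f(X s, Lam s) has powers of norm below 1/4, so 1 is never
  an eigenvalue of A(s); by the mean value inequality f(-, l) then has no fixed points on small
  spheres around X s when l is near Lam s. As the graph of X is connected, X cannot jump across
  these spheres, so X is continuous, and having limits at both ends it is bounded and uniformly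
  continuous, like Lam.

  On a compact neighbourhood of the path f' is uniformly continuous, so on a thin tube around
  X s each map x \<mapsto> f(x, Lam(s + k r)), k < n, is A(s) plus a \<delta>-Lipschitz error once r is
  small. Composing n \<le> N(N+1) of them gives A(s)^n plus an error with Lipschitz constant
  n \<delta> L^n, where L bounds the Lipschitz constants of the single steps, and the bound 1/4 on
  A(s)^n leaves the factor 1/2. Uniform continuity of f and X keeps the drift of the tube centre
  during these n steps small, so the tube is mapped into itself.
\<close>

section \<open>Connected graphs over the real line\<close>

lemma connected_graph_stays_in_open_right:
  fixes X :: "real \<Rightarrow> 'a::topological_space"
  assumes conn: "connected {(t, X t) | t. True}"
    and U: "open U" and V: "open V" and UV: "U \<inter> V = {}"
    and cover: "\<And>t. a < t \<Longrightarrow> t < b \<Longrightarrow> X t \<in> U \<union> V"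
    and s: "a < s0" "s0 < s" "s < b" and s0: "X s0 \<in> U"
  shows "X s \<in> U"
proof (rule ccontr)
  let ?G = "{(t, X t) | t. True}"
  assume "X s \<notin> U"
  with cover[of s] s have Xs: "X s \<in> V" by auto
  have separated: False
    if "open A" "open B" "A \<inter> B \<inter> ?G = {}" "\<And>t. (t, X t) \<in> A \<union> B" "(s0, X s0) \<in> A" "(s, X s) \<in> B"
    for A B
    using connectedD[OF conn that(1-3)] that(4-6) by blast
  \<comment> \<open>Cut the graph at a point of V left of s0 if there is one; otherwise all of (a, s0) lies
    in U and everything left of s0 can be put on the U side.\<close>
  show False
  proof (cases "\<exists>s2\<in>{a<..<s0}. X s2 \<in> V")
    case True
    then obtain s2 where s2: "a < s2" "s2 < s0" "X s2 \<in> V" by auto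
    show False
    proof (rule separated)
      show "open ({s2<..<s} \<times> U)"
        by (intro open_Times open_greaterThanLessThan U)
      show "open ({..<s2} \<times> UNIV \<union> {s<..} \<times> UNIV \<union> {a<..<b} \<times> V)"
        by (intro open_Un open_Times open_lessThan open_greaterThan open_greaterThanLessThan open_UNIV V)
      show "(t, X t) \<in> {s2<..<s} \<times> U \<union> ({..<s2} \<times> UNIV \<union> {s<..} \<times> UNIV \<union> {a<..<b} \<times> V)" for t
        using cover[of t] s s2 Xs by (cases t s2 rule: linorder_cases; cases t s rule: linorder_cases) auto
    qed (use UV s s2 s0 Xs in auto)
  next
    case False
    show False
    proof (rule separated)
      show "open ({..<s0} \<times> UNIV \<union> {..<s} \<times> U)"
        by (intro open_Un open_Times open_lessThan open_UNIV U)
      show "open ({s<..} \<times> UNIV \<union> {a<..<b} \<times> V)"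
        by (intro open_Un open_Times open_greaterThan open_greaterThanLessThan open_UNIV V)
      show "(t, X t) \<in> {..<s0} \<times> UNIV \<union> {..<s} \<times> U \<union> ({s<..} \<times> UNIV \<union> {a<..<b} \<times> V)" for t
        using cover[of t] s Xs by (cases t s0 rule: linorder_cases; cases t s rule: linorder_cases) auto
    qed (use UV False s s0 Xs in auto)
  qed
qed

lemma connected_graph_stays_in_open:
  fixes X :: "real \<Rightarrow> 'a::topological_space"
  assumes conn: "connected {(t, X t) | t. True}"
    and U: "open U" and V: "open V" and UV: "U \<inter> V = {}"
    and cover: "\<And>t. a < t \<Longrightarrow> t < b \<Longrightarrow> X t \<in> U \<union> V"
    and s0: "a < s0" "s0 < b" "X s0 \<in> U" and s: "a < s" "s < b"
  shows "X s \<in> U"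
proof (cases s s0 rule: linorder_cases)
  case less
  have "{(t, X (- t)) | t. True} = (\<lambda>(t, x). (- t, x)) ` {(t, X t) | t. True}"
    by (auto simp: image_iff intro!: exI[of _ "- _"])
  moreover have "connected ((\<lambda>(t, x). (- t, x)) ` {(t, X t) | t. True})"
    unfolding case_prod_unfold by (intro connected_continuous_image conn continuous_intros)
  ultimately have "connected {(t, X (- t)) | t. True}" by simp
  from connected_graph_stays_in_open_right[OF this U V UV, of "- b" "- a" "- s0" "- s"]
  show ?thesis using cover less s0 s by simp
qed (use connected_graph_stays_in_open_right[OF assms(1-5)] s0 s in auto)

lemma continuous_on_if_connected_graph:
  fixes X :: "real \<Rightarrow> 'a::metric_space"
  assumes conn: "connected {(t, X t) | t. True}"
    and sphere_gap: "\<And>s0 e. e > 0 \<Longrightarrow>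
      \<exists>\<rho>. 0 < \<rho> \<and> \<rho> \<le> e \<and> (\<exists>\<eta>>0. \<forall>s. dist s s0 < \<eta> \<longrightarrow> dist (X s) (X s0) \<noteq> \<rho>)"
  shows "continuous_on UNIV X"
  unfolding continuous_on_iff
proof (intro ballI allI impI)
  fix s0 e :: real assume "e > 0"
  then obtain \<rho> \<eta> where \<rho>: "0 < \<rho>" "\<rho> \<le> e" and \<eta>: "\<eta> > 0"
    and gap: "\<And>s. dist s s0 < \<eta> \<Longrightarrow> dist (X s) (X s0) \<noteq> \<rho>"
    using sphere_gap by meson
  have "X s \<in> ball (X s0) \<rho>" if "dist s s0 < \<eta>" for s
  proof (rule connected_graph_stays_in_open[of X _ "- cball (X s0) \<rho>" "s0 - \<eta>" "s0 + \<eta>" s0])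
    show "X t \<in> ball (X s0) \<rho> \<union> - cball (X s0) \<rho>" if "s0 - \<eta> < t" "t < s0 + \<eta>" for t
      using gap[of t] that by (auto simp: dist_real_def dist_commute abs_diff_less_iff)
  qed (use conn that \<rho> \<eta> in \<open>auto simp: dist_real_def abs_diff_less_iff\<close>)
  then show "\<exists>\<eta>>0. \<forall>s\<in>UNIV. dist s s0 < \<eta> \<longrightarrow> dist (X s) (X s0) < e"
    using \<eta> \<rho> by (force simp: dist_commute)
qed

section \<open>The partial derivative D_x f\<close>

lemma bounded_linear_Dx: "bounded_linear (Dx f' x l)"
  unfolding Dx_def
  by (intro bounded_linear_compose[OF blinfun.bounded_linear_right] bounded_linear_Pair
      bounded_linear_ident bounded_linear_zero)

lemma norm_Dx_le: "norm (Dx f' x l h) \<le> norm (f' (x, l)) * norm h"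
  unfolding Dx_def using norm_blinfun[of "f' (x, l)" "(h, 0)"] by (simp add: norm_Pair)

lemma onorm_Dx_diff_le: "onorm (\<lambda>h. Dx f' x l h - Dx f' x' l' h) \<le> norm (f' (x, l) - f' (x', l'))"
proof (rule onorm_bound)
  show "norm (Dx f' x l h - Dx f' x' l' h) \<le> norm (f' (x, l) - f' (x', l')) * norm h" for h
    unfolding Dx_def using norm_blinfun[of "f' (x, l) - f' (x', l')" "(h, 0)"]
    by (simp add: norm_Pair blinfun.diff_left)
qed simp

lemma has_derivative_Dx:
  assumes f_deriv: "\<And>z. (f has_derivative blinfun_apply (f' z)) (at z)"
  shows "((\<lambda>x. f (x, l)) has_derivative Dx f' x l) (at x within S)"
proof -
  have "((\<lambda>x. (x, l)) has_derivative (\<lambda>h. (h, 0))) (at x within S)"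
    by (auto intro!: derivative_eq_intros)
  moreover have "(f has_derivative blinfun_apply (f' (x, l))) (at (x, l) within (\<lambda>x. (x, l)) ` S)"
    using f_deriv has_derivative_at_withinI by blast
  ultimately show ?thesis
    unfolding Dx_def by (rule has_derivative_in_compose)
qed

lemma Dx_linearization_bound:
  assumes f_deriv: "\<And>z. (f has_derivative blinfun_apply (f' z)) (at z)"
    and A: "bounded_linear A"
    and close: "\<And>z. z \<in> cball x0 \<rho> \<Longrightarrow> onorm (\<lambda>h. Dx f' z l h - A h) \<le> \<delta>"
    and x: "x \<in> cball x0 \<rho>" and x': "x' \<in> cball x0 \<rho>"
  shows "norm (f (x, l) - f (x', l) - A (x - x')) \<le> \<delta> * norm (x - x')"
proof -
  define g where "g z = f (z, l) - A z" for z
  have "(g has_derivative (\<lambda>h. Dx f' z l h - A h)) (at z within cball x0 \<rho>)" for z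
    unfolding g_def
    by (intro has_derivative_diff has_derivative_Dx[OF f_deriv] bounded_linear_imp_has_derivative A)
  then have "norm (g x - g x') \<le> \<delta> * norm (x - x')"
    by (rule differentiable_bound[OF convex_cball _ close x x'])
  then show ?thesis
    unfolding g_def by (simp add: linear_diff[OF bounded_linear.linear[OF A]] algebra_simps)
qed

section \<open>Continuity of the stable path\<close>

lemma bounded_linear_funpow:
  fixes A :: "'a::real_normed_vector \<Rightarrow> 'a"
  assumes "bounded_linear A"
  shows "bounded_linear (A ^^ n)"
proof (induction n)
  case 0
  show ?case
    by (simp add: id_def)
next
  case (Suc n)
  then show ?case
    unfolding funpow.simps(2) o_def by (rule bounded_linear_compose[OF assms])
qed

lemma id_minus_bounded_below:
  fixes A :: "'a::euclidean_space \<Rightarrow> 'a"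
  assumes A: "bounded_linear A" and power_small: "onorm (A ^^ N) < 1"
  shows "\<exists>c>0. \<forall>v. c * norm v \<le> norm (v - A v)"
proof -
  have "v = 0" if "v - A v = 0" for v
  proof -
    have "(A ^^ n) v = v" for n
      using that by (induction n) auto
    then have "norm v \<le> onorm (A ^^ N) * norm v"
      using onorm[OF bounded_linear_funpow[OF A]] by metis
    with power_small show "v = 0"
      by (metis mult_le_cancel_right1 norm_le_zero_iff not_less)
  qed
  moreover have "bounded_linear (\<lambda>v. v - A v)"
    by (intro bounded_linear_sub bounded_linear_ident A)
  ultimately show ?thesis
    using injective_imp_isometric[of UNIV "\<lambda>v. v - A v"] by auto
qed

lemma fixed_point_displacement_lower_bound:
  assumes f_deriv: "\<And>z. (f has_derivative blinfun_apply (f' z)) (at z)"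
    and bounded_below: "\<And>v. c * norm v \<le> norm (v - Dx f' x0 l0 v)"
    and close: "\<And>z. z \<in> cball x0 \<rho> \<Longrightarrow> onorm (\<lambda>h. Dx f' z l h - Dx f' x0 l0 h) \<le> c/2"
    and x: "x \<in> cball x0 \<rho>" and fixed: "f (x, l) = x"
  shows "c/2 * norm (x - x0) \<le> norm (f (x0, l) - x0)"
proof -
  define A where "A = Dx f' x0 l0"
  have "0 \<le> \<rho>"
    using x zero_le_dist order_trans by (metis mem_cball)
  then have "norm (f (x, l) - f (x0, l) - A (x - x0)) \<le> c/2 * norm (x - x0)"
    unfolding A_def using x close
    by (intro Dx_linearization_bound[OF f_deriv bounded_linear_Dx]) auto
  moreover have "c * norm (x - x0) \<le> norm ((x - x0) - A (x - x0))"
    using bounded_below unfolding A_def .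
  moreover have "(x - x0) - A (x - x0) = (f (x, l) - f (x0, l) - A (x - x0)) + (f (x0, l) - x0)"
    using fixed by (simp add: algebra_simps)
  ultimately show ?thesis
    using norm_triangle_ineq[of "f (x, l) - f (x0, l) - A (x - x0)" "f (x0, l) - x0"] by simp
qed

lemma fixed_points_avoid_sphere:
  fixes f :: "(real^'l) \<times> (real^'m) \<Rightarrow> real^'l"
  assumes f_deriv: "\<And>z. (f has_derivative blinfun_apply (f' z)) (at z)"
    and f'_cont: "continuous_on UNIV f'"
    and c: "c > 0" and bounded_below: "\<And>v. c * norm v \<le> norm (v - Dx f' x0 l0 v)"
    and fixed: "f (x0, l0) = x0"
  shows "\<exists>\<rho>0>0. \<forall>\<rho>. 0 < \<rho> \<and> \<rho> \<le> \<rho>0 \<longrightarrow>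
           (\<exists>\<eta>>0. \<forall>l x. dist l l0 < \<eta> \<longrightarrow> f (x, l) = x \<longrightarrow> norm (x - x0) \<noteq> \<rho>)"
proof -
  obtain d where d: "d > 0" "\<And>z. dist z (x0, l0) < d \<Longrightarrow> dist (f' z) (f' (x0, l0)) < c/2"
    using f'_cont c unfolding continuous_on_iff by (metis UNIV_I half_gt_zero)
  have "continuous_on UNIV f"
    using f_deriv has_derivative_continuous continuous_at_imp_continuous_on by blast
  then have "continuous_on UNIV (\<lambda>l. f (x0, l))"
    by (rule continuous_on_compose2) (auto intro!: continuous_intros)
  then have f_cont: "\<exists>\<eta>>0. \<forall>l. dist l l0 < \<eta> \<longrightarrow> dist (f (x0, l)) x0 < e" if "e > 0" for e
    using that fixed unfolding continuous_on_iff by (metis UNIV_I)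
  show ?thesis
  proof (rule exI[of _ "d/2"], intro conjI allI impI)
    show "d/2 > 0" using d by simp
  next
    fix \<rho> :: real assume \<rho>: "0 < \<rho> \<and> \<rho> \<le> d/2"
    obtain \<eta> where \<eta>: "\<eta> > 0" "\<And>l. dist l l0 < \<eta> \<Longrightarrow> dist (f (x0, l)) x0 < c * \<rho> / 2"
      using f_cont[of "c * \<rho> / 2"] c \<rho> by auto
    show "\<exists>\<eta>>0. \<forall>l x. dist l l0 < \<eta> \<longrightarrow> f (x, l) = x \<longrightarrow> norm (x - x0) \<noteq> \<rho>"
    proof (rule exI[of _ "min \<eta> (d/2)"], intro conjI allI impI notI)
      show "min \<eta> (d/2) > 0" using \<eta> d by simp
    next
      fix l x assume l: "dist l l0 < min \<eta> (d/2)" and fx: "f (x, l) = x" and x: "norm (x - x0) = \<rho>"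
      have "onorm (\<lambda>h. Dx f' z l h - Dx f' x0 l0 h) \<le> c/2" if "z \<in> cball x0 \<rho>" for z
      proof -
        have "dist (z, l) (x0, l0) \<le> dist z x0 + dist l l0"
          using norm_Pair_le[of "z - x0" "l - l0"] by (simp add: dist_norm)
        also have "\<dots> < d"
          using that \<rho> l by (simp add: dist_commute)
        finally have "norm (f' (z, l) - f' (x0, l0)) < c/2"
          using d(2) by (simp add: dist_norm)
        then show ?thesis
          using onorm_Dx_diff_le[of f' z l x0 l0] by linarith
      qed
      then have "c/2 * norm (x - x0) \<le> norm (f (x0, l) - x0)"
        using x \<rho> by (intro fixed_point_displacement_lower_bound[OF f_deriv bounded_below _ _ fx])
          (auto simp: dist_norm norm_minus_commute)
      with x \<eta>(2)[of l] l show False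
        by (simp add: dist_norm)
    qed
  qed
qed

lemma continuous_on_fixed_point_path:
  fixes f :: "(real^'l) \<times> (real^'m) \<Rightarrow> real^'l"
    and Lam :: "real \<Rightarrow> real^'m" and X :: "real \<Rightarrow> real^'l"
  assumes f_deriv: "\<And>z. (f has_derivative blinfun_apply (f' z)) (at z)"
    and f'_cont: "continuous_on UNIV f'" and Lam_cont: "continuous_on UNIV Lam"
    and fixed: "\<And>s. f (X s, Lam s) = X s" and conn: "connected {(s, X s) | s. True}"
    and bounded_below: "\<And>s. \<exists>c>0. \<forall>v. c * norm v \<le> norm (v - Dx f' (X s) (Lam s) v)"
  shows "continuous_on UNIV X"
proof (rule continuous_on_if_connected_graph[OF conn])
  fix s0 e :: real assume "e > 0"
  obtain c where "c > 0" "\<And>v. c * norm v \<le> norm (v - Dx f' (X s0) (Lam s0) v)"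
    using bounded_below by blast
  from fixed_points_avoid_sphere[OF f_deriv f'_cont this fixed]
  obtain \<rho>0 where "\<rho>0 > 0" and avoid: "\<And>\<rho>. 0 < \<rho> \<and> \<rho> \<le> \<rho>0 \<Longrightarrow>
      \<exists>\<eta>>0. \<forall>l x. dist l (Lam s0) < \<eta> \<longrightarrow> f (x, l) = x \<longrightarrow> norm (x - X s0) \<noteq> \<rho>"
    by blast
  define \<rho> where "\<rho> = min e \<rho>0"
  obtain \<eta> where "\<eta> > 0" and \<eta>: "\<And>l x. dist l (Lam s0) < \<eta> \<Longrightarrow> f (x, l) = x \<Longrightarrow> norm (x - X s0) \<noteq> \<rho>"
    using avoid[of \<rho>] \<open>e > 0\<close> \<open>\<rho>0 > 0\<close> unfolding \<rho>_def by auto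
  obtain \<eta>' where "\<eta>' > 0" and \<eta>': "\<And>s. dist s s0 < \<eta>' \<Longrightarrow> dist (Lam s) (Lam s0) < \<eta>"
    using Lam_cont \<open>\<eta> > 0\<close> unfolding continuous_on_iff by blast
  have "dist (X s) (X s0) \<noteq> \<rho>" if "dist s s0 < \<eta>'" for s
    using \<eta>[OF \<eta>'[OF that] fixed] by (simp add: dist_norm)
  moreover have "0 < \<rho>" "\<rho> \<le> e"
    using \<open>e > 0\<close> \<open>\<rho>0 > 0\<close> unfolding \<rho>_def by auto
  ultimately show "\<exists>\<rho>. 0 < \<rho> \<and> \<rho> \<le> e \<and> (\<exists>\<eta>>0. \<forall>s. dist s s0 < \<eta> \<longrightarrow> dist (X s) (X s0) \<noteq> \<rho>)"
    using \<open>\<eta>' > 0\<close> by blast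
qed

lemma bounded_range_if_tendsto_at_bot_at_top:
  fixes g :: "real \<Rightarrow> 'a::real_normed_vector"
  assumes cont: "continuous_on UNIV g" and bot: "(g \<longlongrightarrow> a) at_bot" and top: "(g \<longlongrightarrow> b) at_top"
  shows "bounded (range g)"
proof -
  obtain T1 where T1: "\<And>x. x \<le> T1 \<Longrightarrow> dist (g x) a < 1"
    using bot unfolding tendsto_iff eventually_at_bot_linorder by (meson zero_less_one)
  obtain T2 where T2: "\<And>x. x \<ge> T2 \<Longrightarrow> dist (g x) b < 1"
    using top unfolding tendsto_iff eventually_at_top_linorder by (meson zero_less_one)
  have "g x \<in> g ` {T1..T2} \<union> ball a 1 \<union> ball b 1" for x
    using T1[of x] T2[of x] by (cases "x \<le> T1"; cases "x \<ge> T2") (auto simp: dist_commute)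
  then have "range g \<subseteq> g ` {T1..T2} \<union> ball a 1 \<union> ball b 1"
    by blast
  moreover have "bounded (g ` {T1..T2})"
    by (intro compact_imp_bounded compact_continuous_image continuous_on_subset[OF cont]) auto
  ultimately show ?thesis
    by (meson bounded_Un bounded_ball bounded_subset)
qed

lemma uniformly_continuous_if_tendsto_at_bot_at_top:
  fixes g :: "real \<Rightarrow> 'a::real_normed_vector"
  assumes cont: "continuous_on UNIV g" and bot: "(g \<longlongrightarrow> a) at_bot" and top: "(g \<longlongrightarrow> b) at_top"
  shows "uniformly_continuous_on UNIV g"
  unfolding uniformly_continuous_on_def
proof (intro allI impI)
  fix e :: real assume "e > 0"
  then obtain T1 where T1: "\<And>x. x \<le> T1 \<Longrightarrow> dist (g x) a < e/2"
    using bot unfolding tendsto_iff eventually_at_bot_linorder by (meson half_gt_zero)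
  obtain T2 where T2: "\<And>x. x \<ge> T2 \<Longrightarrow> dist (g x) b < e/2"
    using top \<open>e > 0\<close> unfolding tendsto_iff eventually_at_top_linorder by (meson half_gt_zero)
  have "uniformly_continuous_on {T1 - 1..T2 + 1} g"
    by (intro compact_uniformly_continuous continuous_on_subset[OF cont]) auto
  then obtain d where d: "d > 0"
    and close: "\<And>x x'. x \<in> {T1 - 1..T2 + 1} \<Longrightarrow> x' \<in> {T1 - 1..T2 + 1} \<Longrightarrow> dist x' x < d \<Longrightarrow>
                  dist (g x') (g x) < e"
    using \<open>e > 0\<close> unfolding uniformly_continuous_on_def by metis
  have "dist (g x') (g x) < e" if near: "dist x' x < min d 1" for x x'
  proof -
    have "\<bar>x' - x\<bar> < 1"
      using near by (simp add: dist_real_def)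
    then consider "x \<in> {T1 - 1..T2 + 1} \<and> x' \<in> {T1 - 1..T2 + 1}" | "x \<le> T1 \<and> x' \<le> T1" | "x \<ge> T2 \<and> x' \<ge> T2"
      by fastforce
    then show ?thesis
    proof cases
      case 2
      then show ?thesis using T1 dist_triangle_half_l[of "g x'" a e "g x"] by auto
    next
      case 3
      then show ?thesis using T2 dist_triangle_half_l[of "g x'" b e "g x"] by auto
    qed (use close near in auto)
  qed
  then show "\<exists>d>0. \<forall>x\<in>UNIV. \<forall>x'\<in>UNIV. dist x' x < d \<longrightarrow> dist (g x') (g x) < e"
    using d by (intro exI[of _ "min d 1"]) auto
qed

lemma uniformly_continuous_on_small_steps:
  fixes g :: "real \<Rightarrow> 'a::metric_space"
  assumes uc: "uniformly_continuous_on UNIV g" and e: "e > 0"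
  shows "\<exists>r0>0. \<forall>r k s. 0 < r \<and> r \<le> r0 \<longrightarrow> k \<le> K \<longrightarrow> dist (g (s + real k * r)) (g s) < e"
proof -
  obtain \<eta> where "\<eta> > 0" and \<eta>: "\<And>t t'. dist t' t < \<eta> \<Longrightarrow> dist (g t') (g t) < e"
    using uc e unfolding uniformly_continuous_on_def by (metis UNIV_I)
  have "dist (g (s + real k * r)) (g s) < e" if "0 < r" "r \<le> \<eta> / (real K + 1)" "k \<le> K" for r k s
  proof (rule \<eta>)
    have "real k * r \<le> real K * (\<eta> / (real K + 1))"
      using that by (intro mult_mono) auto
    also have "\<dots> < \<eta>"
      using \<open>\<eta> > 0\<close> by (simp add: divide_simps add_pos_pos)
    finally show "dist (s + real k * r) s < \<eta>"
      using \<open>0 < r\<close> by (simp add: dist_real_def)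
  qed
  then show ?thesis
    using \<open>\<eta> > 0\<close> by (intro exI[of _ "\<eta> / (real K + 1)"]) auto
qed

lemma stable_path_uniformly_continuous_bounded:
  fixes f :: "(real^'l) \<times> (real^'m) \<Rightarrow> real^'l"
    and Lam :: "real \<Rightarrow> real^'m" and X :: "real \<Rightarrow> real^'l"
  assumes f_deriv: "\<And>z. (f has_derivative blinfun_apply (f' z)) (at z)"
    and f'_cont: "continuous_on UNIV f'"
    and shift: "parameter_shift Lam lm lp"
    and stable: "stable_path f f' Lam lm lp X"
    and power_small: "\<And>s. onorm (Dx f' (X s) (Lam s) ^^ N) < 1"
  shows "uniformly_continuous_on UNIV X" "bounded (range X)"
    and "uniformly_continuous_on UNIV Lam" "bounded (range Lam)"
proof -
  have fixed: "\<And>s. f (X s, Lam s) = X s" and conn: "connected {(s, X s) | s. True}"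
    using stable by (simp_all add: stable_path_def)
  obtain Xm Xp where X_lim: "(X \<longlongrightarrow> Xm) at_bot" "(X \<longlongrightarrow> Xp) at_top"
    using stable unfolding stable_path_def by (elim conjE exE)
  obtain Lam' where "\<And>s. (Lam has_vector_derivative Lam' s) (at s)"
    using shift unfolding parameter_shift_def by blast
  then have Lam_cont: "continuous_on UNIV Lam"
    using has_vector_derivative_continuous continuous_at_imp_continuous_on by blast
  have Lam_lim: "(Lam \<longlongrightarrow> lm) at_bot" "(Lam \<longlongrightarrow> lp) at_top"
    using shift by (simp_all add: parameter_shift_def)
  have "continuous_on UNIV X"
    using id_minus_bounded_below[OF bounded_linear_Dx power_small]
    by (rule continuous_on_fixed_point_path[OF f_deriv f'_cont Lam_cont fixed conn])
  then show "uniformly_continuous_on UNIV X" "bounded (range X)"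
    by (rule uniformly_continuous_if_tendsto_at_bot_at_top[OF _ X_lim],
        rule bounded_range_if_tendsto_at_bot_at_top[OF _ X_lim])
  show "uniformly_continuous_on UNIV Lam" "bounded (range Lam)"
    by (rule uniformly_continuous_if_tendsto_at_bot_at_top[OF Lam_cont Lam_lim],
        rule bounded_range_if_tendsto_at_bot_at_top[OF Lam_cont Lam_lim])
qed

section \<open>Uniform linearization near a bounded set\<close>

lemma uniformly_continuous_near_bounded:
  fixes g :: "'a::euclidean_space \<Rightarrow> 'b::metric_space"
  assumes cont: "continuous_on UNIV g" and P: "bounded P" and e: "e > 0"
  shows "\<exists>d>0. \<forall>p\<in>P. \<forall>q. dist q p < d \<longrightarrow> dist (g q) (g p) < e"
proof -
  define C where "C = {p + h | p h. p \<in> closure P \<and> h \<in> cball 0 1}"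
  have "compact C"
    unfolding C_def using P by (intro compact_sums compact_cball) simp
  then have "uniformly_continuous_on C g"
    by (intro compact_uniformly_continuous continuous_on_subset[OF cont]) auto
  then obtain d where d: "d > 0" "\<And>q p. q \<in> C \<Longrightarrow> p \<in> C \<Longrightarrow> dist p q < d \<Longrightarrow> dist (g p) (g q) < e"
    using e unfolding uniformly_continuous_on_def by metis
  have C: "q \<in> C" if "p \<in> P" "dist q p \<le> 1" for p q
  proof -
    have "q = p + (q - p)" by simp
    moreover have "p \<in> closure P" using that closure_subset by blast
    moreover have "q - p \<in> cball 0 1" using that(2) by (simp add: dist_norm norm_minus_commute)
    ultimately show ?thesis
      unfolding C_def by blast
  qed
  show ?thesis
    using d C by (intro exI[of _ "min d 1"]) (auto simp: dist_commute)
qed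

lemma uniform_linearization_near_bounded:
  fixes f :: "(real^'l) \<times> (real^'m) \<Rightarrow> real^'l"
  assumes f_deriv: "\<And>z. (f has_derivative blinfun_apply (f' z)) (at z)"
    and f'_cont: "continuous_on UNIV f'" and P: "bounded P" and \<delta>: "\<delta> > 0"
  shows "\<exists>\<rho>>0. \<forall>x0 l0 l x x'. (x0, l0) \<in> P \<longrightarrow> norm (l - l0) \<le> \<rho> \<longrightarrow>
           norm (x - x0) \<le> \<rho> \<longrightarrow> norm (x' - x0) \<le> \<rho> \<longrightarrow>
           norm (f (x, l) - f (x', l) - Dx f' x0 l0 (x - x')) \<le> \<delta> * norm (x - x')"
proof -
  obtain d where d: "d > 0" "\<And>p q. p \<in> P \<Longrightarrow> dist q p < d \<Longrightarrow> dist (f' q) (f' p) < \<delta>"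
    using uniformly_continuous_near_bounded[OF f'_cont P \<delta>] by blast
  have "norm (f (x, l) - f (x', l) - Dx f' x0 l0 (x - x')) \<le> \<delta> * norm (x - x')"
    if P: "(x0, l0) \<in> P" and l: "norm (l - l0) \<le> d/3"
      and x: "norm (x - x0) \<le> d/3" and x': "norm (x' - x0) \<le> d/3" for x0 l0 l x x'
  proof (rule Dx_linearization_bound[OF f_deriv bounded_linear_Dx])
    show "onorm (\<lambda>h. Dx f' z l h - Dx f' x0 l0 h) \<le> \<delta>" if "z \<in> cball x0 (d/3)" for z
    proof -
      have "dist (z, l) (x0, l0) \<le> dist z x0 + dist l l0"
        using norm_Pair_le[of "z - x0" "l - l0"] by (simp add: dist_norm)
      also have "\<dots> < d"
        using that l d(1) by (simp add: dist_norm norm_minus_commute)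
      finally show ?thesis
        using onorm_Dx_diff_le[of f' z l x0 l0] d(2)[OF P] by (force simp: dist_norm)
    qed
  qed (use x x' in \<open>auto simp: dist_norm norm_minus_commute\<close>)
  then show ?thesis
    using d(1) by (intro exI[of _ "d/3"]) auto
qed

lemma fixed_point_drift_near_bounded_path:
  fixes f :: "'a::euclidean_space \<times> 'b::euclidean_space \<Rightarrow> 'a"
    and X :: "real \<Rightarrow> 'a" and Lam :: "real \<Rightarrow> 'b"
  assumes cont: "continuous_on UNIV f" and fixed: "\<And>s. f (X s, Lam s) = X s"
    and P: "bounded (range (\<lambda>s. (X s, Lam s)))" and \<gamma>: "\<gamma> > 0"
  shows "\<exists>\<rho>>0. \<forall>s l. norm (l - Lam s) \<le> \<rho> \<longrightarrow> norm (f (X s, l) - X s) \<le> \<gamma>"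
proof -
  from uniformly_continuous_near_bounded[OF cont P \<gamma>]
  obtain d where "d > 0"
    and d: "\<And>p q. p \<in> range (\<lambda>s. (X s, Lam s)) \<Longrightarrow> dist q p < d \<Longrightarrow> dist (f q) (f p) < \<gamma>"
    by blast
  have on_path: "(X s, Lam s) \<in> range (\<lambda>s. (X s, Lam s))" for s
    by (rule rangeI)
  have "norm (f (X s, l) - X s) \<le> \<gamma>" if "norm (l - Lam s) \<le> d/2" for s l
    using d[OF on_path[of s], of "(X s, l)"] that \<open>d > 0\<close> fixed[of s] by (simp add: dist_Pair_Pair dist_norm)
  with \<open>d > 0\<close> show ?thesis
    by (intro exI[of _ "d/2"]) auto
qed

section \<open>Orbits of nearly linear maps\<close>

fun orbit :: "(nat \<Rightarrow> 'a \<Rightarrow> 'a) \<Rightarrow> 'a \<Rightarrow> nat \<Rightarrow> 'a" where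
  "orbit F y 0 = y"
| "orbit F y (Suc k) = F k (orbit F y k)"

locale near_linear_maps =
  fixes F :: "nat \<Rightarrow> 'a::real_normed_vector \<Rightarrow> 'a" and A :: "'a \<Rightarrow> 'a"
    and x0 :: 'a and \<rho> \<delta> M L :: real and n :: nat
  assumes linear: "bounded_linear A"
    and norm_A: "\<And>h. norm (A h) \<le> M * norm h"
    and near_linear: "\<And>k x x'. k < n \<Longrightarrow> norm (x - x0) \<le> \<rho> \<Longrightarrow> norm (x' - x0) \<le> \<rho> \<Longrightarrow>
                        norm (F k x - F k x' - A (x - x')) \<le> \<delta> * norm (x - x')"
    and nonneg: "0 \<le> M" "0 \<le> \<delta>"
    and L: "M + \<delta> \<le> L" "1 \<le> L"
begin

lemma Lipschitz:
  assumes "k < n" "norm (x - x0) \<le> \<rho>" "norm (x' - x0) \<le> \<rho>"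
  shows "norm (F k x - F k x') \<le> L * norm (x - x')"
proof -
  have "norm (F k x - F k x') = norm ((F k x - F k x' - A (x - x')) + A (x - x'))"
    by simp
  also have "\<dots> \<le> \<delta> * norm (x - x') + M * norm (x - x')"
    by (rule norm_triangle_mono[OF near_linear[OF assms] norm_A])
  also have "\<dots> \<le> L * norm (x - x')"
    using L by (simp add: mult_right_mono flip: distrib_right)
  finally show ?thesis .
qed

lemma orbit_stays_near:
  assumes drift: "\<And>k. k < n \<Longrightarrow> norm (F k x0 - x0) \<le> \<gamma>" and "0 \<le> \<gamma>"
    and y: "norm (y - x0) \<le> e" and small: "L ^ n * (e + real n * \<gamma>) \<le> \<rho>"
  shows "k \<le> n \<Longrightarrow> norm (orbit F y k - x0) \<le> L ^ k * (e + real k * \<gamma>)"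
proof (induction k)
  case 0
  then show ?case using y by simp
next
  case (Suc k)
  have "0 \<le> e" using y norm_ge_zero order_trans by blast
  have IH: "norm (orbit F y k - x0) \<le> L ^ k * (e + real k * \<gamma>)"
    using Suc by simp
  also have "\<dots> \<le> L ^ n * (e + real n * \<gamma>)"
    using L Suc.prems \<open>0 \<le> e\<close> \<open>0 \<le> \<gamma>\<close>
    by (intro mult_mono power_increasing add_left_mono mult_right_mono) auto
  finally have near: "norm (orbit F y k - x0) \<le> \<rho>"
    using small by linarith
  then have "0 \<le> \<rho>"
    using norm_ge_zero order_trans by blast
  with near have "norm (F k (orbit F y k) - F k x0) \<le> L * norm (orbit F y k - x0)"
    using Lipschitz[of k "orbit F y k" x0] Suc.prems by simp
  also have "\<dots> \<le> L * (L ^ k * (e + real k * \<gamma>))"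
    using IH L by (intro mult_left_mono) auto
  finally have "norm (orbit F y (Suc k) - x0) \<le> L * (L ^ k * (e + real k * \<gamma>)) + \<gamma>"
    using drift[of k] Suc.prems by (intro norm_diff_triangle_le[of _ "F k x0"]) auto
  also have "\<dots> \<le> L ^ Suc k * (e + real (Suc k) * \<gamma>)"
  proof -
    have "\<gamma> \<le> L ^ Suc k * \<gamma>"
      using one_le_power[OF L(2), of "Suc k"] \<open>0 \<le> \<gamma>\<close> by (metis mult_le_cancel_right1 not_le)
    then show ?thesis
      by (simp add: algebra_simps)
  qed
  finally show ?case .
qed

lemma orbit_linearization_error:
  assumes stay: "\<And>k. k \<le> n \<Longrightarrow> norm (orbit F y k - x0) \<le> \<rho>" "\<And>k. k \<le> n \<Longrightarrow> norm (orbit F y' k - x0) \<le> \<rho>"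
  shows "k \<le> n \<Longrightarrow>
           norm (orbit F y k - orbit F y' k - (A ^^ k) (y - y')) \<le> real k * \<delta> * L ^ k * norm (y - y')"
proof (induction k)
  case 0
  then show ?case by simp
next
  case (Suc k)
  define D where "D = norm (y - y')"
  have Lip: "norm (orbit F y j - orbit F y' j) \<le> L ^ j * D" if "j \<le> n" for j
    using that
  proof (induction j)
    case (Suc j)
    then have "norm (orbit F y (Suc j) - orbit F y' (Suc j)) \<le> L * norm (orbit F y j - orbit F y' j)"
      using Lipschitz stay by simp
    also have "\<dots> \<le> L * (L ^ j * D)"
      using Suc L by (intro mult_left_mono) auto
    finally show ?case by simp
  qed (simp add: D_def)
  define E where "E = orbit F y k - orbit F y' k - (A ^^ k) (y - y')"
  have "orbit F y (Suc k) - orbit F y' (Suc k) - (A ^^ Suc k) (y - y')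
        = (F k (orbit F y k) - F k (orbit F y' k) - A (orbit F y k - orbit F y' k)) + A E"
    unfolding E_def by (simp add: linear_diff[OF bounded_linear.linear[OF linear]])
  also have "norm \<dots> \<le> \<delta> * norm (orbit F y k - orbit F y' k) + M * norm E"
    using Suc.prems stay[of k] by (intro norm_triangle_mono near_linear norm_A) auto
  also have "\<dots> \<le> \<delta> * (L ^ k * D) + L * (real k * \<delta> * L ^ k * D)"
    using Lip[of k] Suc nonneg L unfolding E_def D_def
    by (intro add_mono mult_left_mono mult_mono) auto
  also have "\<dots> \<le> real (Suc k) * \<delta> * L ^ Suc k * D"
    using L nonneg mult_left_mono[OF L(2), of "\<delta> * L ^ k * D"]
    by (simp add: algebra_simps D_def)
  finally show ?case unfolding D_def .
qed

lemma orbit_contraction: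
  assumes drift: "\<And>k. k < n \<Longrightarrow> norm (F k x0 - x0) \<le> \<gamma>" and "0 \<le> \<gamma>"
    and y: "norm (y - x0) \<le> e" and y': "norm (y' - x0) \<le> e"
    and power: "\<And>h. norm ((A ^^ n) h) \<le> 1/4 * norm h"
    and small: "L ^ n * (e + real n * \<gamma>) \<le> \<rho>" "real n * \<delta> * L ^ n \<le> 1/4"
  shows "norm (orbit F y n - orbit F y' n) \<le> 1/2 * norm (y - y')"
proof -
  have stay: "norm (orbit F z k - x0) \<le> \<rho>" if "norm (z - x0) \<le> e" "k \<le> n" for z k
  proof -
    have "0 \<le> e" using that(1) norm_ge_zero order_trans by blast
    have "norm (orbit F z k - x0) \<le> L ^ k * (e + real k * \<gamma>)"
      by (rule orbit_stays_near[OF drift \<open>0 \<le> \<gamma>\<close> that(1) small(1) that(2)])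
    also have "\<dots> \<le> L ^ n * (e + real n * \<gamma>)"
      using L that(2) \<open>0 \<le> e\<close> \<open>0 \<le> \<gamma>\<close>
      by (intro mult_mono power_increasing add_left_mono mult_right_mono) auto
    finally show ?thesis using small(1) by linarith
  qed
  have "norm (orbit F y n - orbit F y' n - (A ^^ n) (y - y')) \<le> real n * \<delta> * L ^ n * norm (y - y')"
    using orbit_linearization_error[OF stay[OF y] stay[OF y']] by simp
  also have "\<dots> \<le> 1/4 * norm (y - y')"
    using small(2) by (intro mult_right_mono) auto
  finally show ?thesis
    using power[of "y - y'"]
      norm_triangle_ineq[of "orbit F y n - orbit F y' n - (A ^^ n) (y - y')" "(A ^^ n) (y - y')"]
    by simp
qed

lemma orbit_maps_near:
  assumes drift: "\<And>k. k < n \<Longrightarrow> norm (F k x0 - x0) \<le> \<gamma>" and "0 \<le> \<gamma>"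
    and y: "norm (y - x0) \<le> e"
    and power: "\<And>h. norm ((A ^^ n) h) \<le> 1/4 * norm h"
    and small: "L ^ n * (e + real n * \<gamma>) \<le> \<rho>" "real n * \<delta> * L ^ n \<le> 1/4"
  shows "norm (orbit F y n - x0) \<le> e/2 + L ^ n * (real n * \<gamma>)"
proof -
  have "0 \<le> e" using y norm_ge_zero order_trans by blast
  then have "norm (orbit F y n - orbit F x0 n) \<le> 1/2 * norm (y - x0)"
    using orbit_contraction[OF drift \<open>0 \<le> \<gamma>\<close> y _ power small] by simp
  moreover have "L ^ n * (0 + real n * \<gamma>) \<le> \<rho>"
    using small(1) \<open>0 \<le> e\<close> L by (smt (verit) mult_left_mono zero_le_power)
  then have "norm (orbit F x0 n - x0) \<le> L ^ n * (real n * \<gamma>)"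
    using orbit_stays_near[OF drift \<open>0 \<le> \<gamma>\<close>, of x0 0 n] by simp
  ultimately show ?thesis
    using y by (intro norm_diff_triangle_le[of _ "orbit F x0 n"]) auto
qed

end

lemma orbit_estimates_near_fixed_point:
  fixes f :: "'a::real_normed_vector \<times> 'b::real_normed_vector \<Rightarrow> 'a"
  assumes linear: "bounded_linear A" and norm_A: "\<And>h. norm (A h) \<le> M * norm h" and "0 \<le> M"
    and power: "\<And>h. norm ((A ^^ n) h) \<le> 1/4 * norm h"
    and linearization: "\<And>l x x'. norm (l - l0) \<le> \<rho> \<Longrightarrow> norm (x - x0) \<le> \<rho> \<Longrightarrow> norm (x' - x0) \<le> \<rho> \<Longrightarrow>
                          norm (f (x, l) - f (x', l) - A (x - x')) \<le> \<delta> * norm (x - x')"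
    and params_near: "\<And>k. k < n \<Longrightarrow> norm (\<Lambda> k - l0) \<le> \<rho>"
    and drift: "\<And>k. k < n \<Longrightarrow> norm (f (x0, \<Lambda> k) - x0) \<le> \<gamma>"
    and x1: "norm (x0 - x1) \<le> e/4"
    and bounds: "0 \<le> \<delta>" "0 \<le> \<gamma>" "M + \<delta> \<le> L" "1 \<le> L" "n \<le> K"
      "real K * \<delta> * L ^ K \<le> 1/4" "real K * \<gamma> * L ^ K \<le> e/4" "2 * L ^ K * e \<le> \<rho>"
    and y: "norm (y - x0) \<le> e" and y': "norm (y' - x0) \<le> e"
  shows "norm (orbit (\<lambda>k x. f (x, \<Lambda> k)) y n - x1) \<le> e"
    and "norm (orbit (\<lambda>k x. f (x, \<Lambda> k)) y n - orbit (\<lambda>k x. f (x, \<Lambda> k)) y' n) \<le> 1/2 * norm (y - y')"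
proof -
  interpret near_linear_maps "\<lambda>k x. f (x, \<Lambda> k)" A x0 \<rho> \<delta> M L n
    using linear norm_A \<open>0 \<le> M\<close> linearization params_near bounds by (intro near_linear_maps.intro) auto
  have "0 \<le> e"
    using y norm_ge_zero order_trans by blast
  have "L ^ n \<le> L ^ K"
    using bounds(4,5) by (rule power_increasing[rotated])
  moreover have "0 \<le> L ^ K"
    using bounds(4) by simp
  ultimately have "L ^ n * (real n * \<gamma>) \<le> L ^ K * (real K * \<gamma>)"
    using bounds(2,5) by (intro mult_mono mult_right_mono) auto
  with bounds(7) have drift_bound: "L ^ n * (real n * \<gamma>) \<le> e/4"
    by (simp add: mult_ac)
  have "L ^ n * (e + real n * \<gamma>) \<le> L ^ K * e + e/4"
    using mult_right_mono[OF \<open>L ^ n \<le> L ^ K\<close> \<open>0 \<le> e\<close>] drift_bound by (simp add: distrib_left)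
  also have "\<dots> \<le> \<rho>"
    using mult_right_mono[OF one_le_power[OF bounds(4), of K] \<open>0 \<le> e\<close>] bounds(8) \<open>0 \<le> e\<close> by linarith
  finally have small_orbit: "L ^ n * (e + real n * \<gamma>) \<le> \<rho>" .
  have "real n * \<delta> * L ^ n \<le> real K * \<delta> * L ^ K"
    using bounds(1,4,5) \<open>L ^ n \<le> L ^ K\<close> by (intro mult_mono) auto
  with bounds(6) have small_error: "real n * \<delta> * L ^ n \<le> 1/4"
    by linarith
  note small = small_orbit small_error
  show "norm (orbit (\<lambda>k x. f (x, \<Lambda> k)) y n - orbit (\<lambda>k x. f (x, \<Lambda> k)) y' n) \<le> 1/2 * norm (y - y')"
    by (rule orbit_contraction[OF drift \<open>0 \<le> \<gamma>\<close> y y' power small])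
  have "norm (orbit (\<lambda>k x. f (x, \<Lambda> k)) y n - x0) \<le> e/2 + L ^ n * (real n * \<gamma>)"
    by (rule orbit_maps_near[OF drift \<open>0 \<le> \<gamma>\<close> y power small])
  with drift_bound have "norm (orbit (\<lambda>k x. f (x, \<Lambda> k)) y n - x0) \<le> 3/4 * e"
    by linarith
  from norm_diff_triangle_le[OF this x1] show "norm (orbit (\<lambda>k x. f (x, \<Lambda> k)) y n - x1) \<le> e"
    by simp
qed

lemma small_steps_window:
  fixes f :: "'a::real_normed_vector \<times> 'b::real_normed_vector \<Rightarrow> 'a"
    and X :: "real \<Rightarrow> 'a" and Lam :: "real \<Rightarrow> 'b"
  assumes drift: "\<And>\<gamma>. \<gamma> > 0 \<Longrightarrow> \<exists>\<rho>>0. \<forall>s l. norm (l - Lam s) \<le> \<rho> \<longrightarrow> norm (f (X s, l) - X s) \<le> \<gamma>"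
    and X_uc: "uniformly_continuous_on UNIV X" and Lam_uc: "uniformly_continuous_on UNIV Lam"
    and "0 < \<rho>" "0 < \<gamma>" "0 < e"
  shows "\<exists>r0>0. \<forall>r k s. 0 < r \<and> r \<le> r0 \<longrightarrow> k \<le> K \<longrightarrow>
           norm (Lam (s + real k * r) - Lam s) \<le> \<rho> \<and> norm (f (X s, Lam (s + real k * r)) - X s) \<le> \<gamma>
         \<and> norm (X s - X (s + real k * r)) \<le> e"
proof -
  obtain \<rho>d where "\<rho>d > 0" and drift_\<rho>d: "\<And>s l. norm (l - Lam s) \<le> \<rho>d \<Longrightarrow> norm (f (X s, l) - X s) \<le> \<gamma>"
    using drift[OF \<open>0 < \<gamma>\<close>] by blast
  obtain r1 where "r1 > 0" and Lam_steps: "\<And>r k s. 0 < r \<and> r \<le> r1 \<Longrightarrow> k \<le> K \<Longrightarrow>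
      dist (Lam (s + real k * r)) (Lam s) < min \<rho> \<rho>d"
    using uniformly_continuous_on_small_steps[OF Lam_uc, of "min \<rho> \<rho>d" K] \<open>0 < \<rho>\<close> \<open>\<rho>d > 0\<close> by auto
  obtain r2 where "r2 > 0" and X_steps: "\<And>r k s. 0 < r \<and> r \<le> r2 \<Longrightarrow> k \<le> K \<Longrightarrow>
      dist (X (s + real k * r)) (X s) < e"
    using uniformly_continuous_on_small_steps[OF X_uc \<open>0 < e\<close>, of K] by auto
  have "norm (Lam (s + real k * r) - Lam s) \<le> \<rho> \<and> norm (f (X s, Lam (s + real k * r)) - X s) \<le> \<gamma>
      \<and> norm (X s - X (s + real k * r)) \<le> e" if "0 < r" "r \<le> min r1 r2" "k \<le> K" for r k s
    using Lam_steps[of r k s] X_steps[of r k s] drift_\<rho>d[of "Lam (s + real k * r)" s] that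
    by (auto simp: dist_norm norm_minus_commute)
  then show ?thesis
    using \<open>r1 > 0\<close> \<open>r2 > 0\<close> by (intro exI[of _ "min r1 r2"]) auto
qed

lemma orbit_estimates_for_small_shift:
  fixes f :: "'a::real_normed_vector \<times> 'b::real_normed_vector \<Rightarrow> 'a"
    and X :: "real \<Rightarrow> 'a" and Lam :: "real \<Rightarrow> 'b" and A :: "real \<Rightarrow> 'a \<Rightarrow> 'a"
  assumes linear: "\<And>s. bounded_linear (A s)" and norm_A: "\<And>s h. norm (A s h) \<le> M * norm h" and "0 \<le> M"
    and power: "\<And>s n h. N \<le> n \<Longrightarrow> norm ((A s ^^ n) h) \<le> 1/4 * norm h"
    and linearization: "\<And>s l x x'. norm (l - Lam s) \<le> \<rho> \<Longrightarrow> norm (x - X s) \<le> \<rho> \<Longrightarrow> norm (x' - X s) \<le> \<rho> \<Longrightarrow>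
                          norm (f (x, l) - f (x', l) - A s (x - x')) \<le> \<delta> * norm (x - x')"
    and drift: "\<And>\<gamma>. \<gamma> > 0 \<Longrightarrow> \<exists>\<rho>>0. \<forall>s l. norm (l - Lam s) \<le> \<rho> \<longrightarrow> norm (f (X s, l) - X s) \<le> \<gamma>"
    and X_uc: "uniformly_continuous_on UNIV X" and Lam_uc: "uniformly_continuous_on UNIV Lam"
    and bounds: "0 \<le> \<delta>" "M + \<delta> \<le> L" "1 \<le> L" "real K * \<delta> * L ^ K \<le> 1/4" "2 * L ^ K * e \<le> \<rho>" "e > 0"
  shows "\<exists>r0>0. \<forall>r. 0 < r \<and> r \<le> r0 \<longrightarrow> (\<forall>n\<in>{N..K}. \<forall>s y y'. norm (y - X s) \<le> e \<longrightarrow> norm (y' - X s) \<le> e \<longrightarrow>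
           norm (orbit (\<lambda>k x. f (x, Lam (s + real k * r))) y n - X (s + real n * r)) \<le> e \<and>
           norm (orbit (\<lambda>k x. f (x, Lam (s + real k * r))) y n - orbit (\<lambda>k x. f (x, Lam (s + real k * r))) y' n)
             \<le> 1/2 * norm (y - y'))"
proof -
  have "1 \<le> L ^ K"
    using bounds(3) by (rule one_le_power)
  define \<gamma> where "\<gamma> = e / (4 * (real K + 1) * L ^ K)"
  have "0 < \<gamma>"
    unfolding \<gamma>_def using bounds(6) \<open>1 \<le> L ^ K\<close> by simp
  have "real K * \<gamma> * L ^ K \<le> (real K + 1) * \<gamma> * L ^ K"
    using \<open>0 < \<gamma>\<close> \<open>1 \<le> L ^ K\<close> by (intro mult_right_mono) auto
  also have "\<dots> = e/4"
    unfolding \<gamma>_def using \<open>1 \<le> L ^ K\<close> bounds(3) by (simp add: divide_simps add_pos_pos)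
  finally have "real K * \<gamma> * L ^ K \<le> e/4" .
  have "0 < 2 * L ^ K * e"
    using bounds(6) \<open>1 \<le> L ^ K\<close> by simp
  with bounds(5) have "0 < \<rho>"
    by linarith
  obtain r0 where "r0 > 0" and window: "\<And>r k s. 0 < r \<and> r \<le> r0 \<Longrightarrow> k \<le> K \<Longrightarrow>
      norm (Lam (s + real k * r) - Lam s) \<le> \<rho> \<and> norm (f (X s, Lam (s + real k * r)) - X s) \<le> \<gamma>
    \<and> norm (X s - X (s + real k * r)) \<le> e/4"
    using small_steps_window[OF drift X_uc Lam_uc \<open>0 < \<rho>\<close> \<open>0 < \<gamma>\<close>, of "e/4" K] bounds(6) by auto
  show ?thesis
  proof (rule exI[of _ r0], intro conjI allI impI ballI)
    show "r0 > 0" by fact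
  next
    fix r n s y y'
    assume r: "0 < r \<and> r \<le> r0" and n: "n \<in> {N..K}"
      and y: "norm (y - X s) \<le> e" and y': "norm (y' - X s) \<le> e"
    have "N \<le> n" "n \<le> K"
      using n by auto
    have params_near: "norm (Lam (s + real k * r) - Lam s) \<le> \<rho>"
      and drift_near: "norm (f (X s, Lam (s + real k * r)) - X s) \<le> \<gamma>" if "k < n" for k
      using window[OF r, of k s] that \<open>n \<le> K\<close> by auto
    have "norm (X s - X (s + real n * r)) \<le> e/4"
      using window[OF r \<open>n \<le> K\<close>] by blast
    note estimates = orbit_estimates_near_fixed_point[where \<Lambda> = "\<lambda>k. Lam (s + real k * r)",
        OF linear norm_A \<open>0 \<le> M\<close> power[OF \<open>N \<le> n\<close>] linearization[where s=s] params_near drift_near this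
        bounds(1) less_imp_le[OF \<open>0 < \<gamma>\<close>] bounds(2,3) \<open>n \<le> K\<close> bounds(4)
        \<open>real K * \<gamma> * L ^ K \<le> e/4\<close> bounds(5) y y']
    show "norm (orbit (\<lambda>k x. f (x, Lam (s + real k * r))) y n - X (s + real n * r)) \<le> e"
      by (rule estimates(1))
    show "norm (orbit (\<lambda>k x. f (x, Lam (s + real k * r))) y n - orbit (\<lambda>k x. f (x, Lam (s + real k * r))) y' n)
            \<le> 1/2 * norm (y - y')"
      by (rule estimates(2))
  qed
qed

lemma orbit_estimates_for_small_radius_and_shift:
  fixes f :: "'a::real_normed_vector \<times> 'b::real_normed_vector \<Rightarrow> 'a"
    and X :: "real \<Rightarrow> 'a" and Lam :: "real \<Rightarrow> 'b" and A :: "real \<Rightarrow> 'a \<Rightarrow> 'a"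
  assumes linear: "\<And>s. bounded_linear (A s)" and norm_A: "\<And>s h. norm (A s h) \<le> M * norm h" and "0 \<le> M"
    and power: "\<And>s n h. N \<le> n \<Longrightarrow> norm ((A s ^^ n) h) \<le> 1/4 * norm h"
    and linearization: "\<And>\<delta>. \<delta> > 0 \<Longrightarrow> \<exists>\<rho>>0. \<forall>s l x x'. norm (l - Lam s) \<le> \<rho> \<longrightarrow> norm (x - X s) \<le> \<rho> \<longrightarrow>
                          norm (x' - X s) \<le> \<rho> \<longrightarrow> norm (f (x, l) - f (x', l) - A s (x - x')) \<le> \<delta> * norm (x - x')"
    and drift: "\<And>\<gamma>. \<gamma> > 0 \<Longrightarrow> \<exists>\<rho>>0. \<forall>s l. norm (l - Lam s) \<le> \<rho> \<longrightarrow> norm (f (X s, l) - X s) \<le> \<gamma>"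
    and X_uc: "uniformly_continuous_on UNIV X" and Lam_uc: "uniformly_continuous_on UNIV Lam"
  shows "\<exists>e0>0. \<forall>e. 0 < e \<and> e \<le> e0 \<longrightarrow>
           (\<exists>r0>0. \<forall>r. 0 < r \<and> r \<le> r0 \<longrightarrow> (\<forall>n\<in>{N..K}. \<forall>s y y'. norm (y - X s) \<le> e \<longrightarrow> norm (y' - X s) \<le> e \<longrightarrow>
             norm (orbit (\<lambda>k x. f (x, Lam (s + real k * r))) y n - X (s + real n * r)) \<le> e \<and>
             norm (orbit (\<lambda>k x. f (x, Lam (s + real k * r))) y n - orbit (\<lambda>k x. f (x, Lam (s + real k * r))) y' n)
               \<le> 1/2 * norm (y - y')))"
proof -
  \<comment> \<open>With L = M + 1 bounding the Lipschitz constants M + \<delta>, the choice of \<delta> keeps the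
    linearization error K \<delta> L^K of K steps below 1/4, and radii e \<le> \<rho> / (2 L^K) keep K steps
    inside the \<rho>-tube.\<close>
  define B where "B = (M + 1) ^ K"
  have "1 \<le> B"
    unfolding B_def using \<open>0 \<le> M\<close> by (intro one_le_power) simp
  define D where "D = (real K + 1) * B"
  have "1 \<le> D"
    unfolding D_def using mult_mono[of 1 "real K + 1" 1 B] \<open>1 \<le> B\<close> by simp
  define \<delta> where "\<delta> = 1 / (4 * D)"
  have "0 < \<delta>" "\<delta> \<le> 1"
    unfolding \<delta>_def using \<open>1 \<le> D\<close> by auto
  have "real K * \<delta> * B \<le> (real K + 1) * \<delta> * B"
    using \<open>0 < \<delta>\<close> \<open>1 \<le> B\<close> by (intro mult_right_mono) auto
  also have "\<dots> = 1/4"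
    unfolding \<delta>_def using \<open>1 \<le> D\<close> \<open>1 \<le> B\<close> by (simp add: D_def)
  finally have "real K * \<delta> * B \<le> 1/4" .
  obtain \<rho> where "\<rho> > 0" and lin: "\<And>s l x x'. norm (l - Lam s) \<le> \<rho> \<Longrightarrow> norm (x - X s) \<le> \<rho> \<Longrightarrow>
      norm (x' - X s) \<le> \<rho> \<Longrightarrow> norm (f (x, l) - f (x', l) - A s (x - x')) \<le> \<delta> * norm (x - x')"
    using linearization[OF \<open>0 < \<delta>\<close>] by blast
  show ?thesis
  proof (rule exI[of _ "\<rho> / (2 * B)"], intro conjI allI impI)
    show "\<rho> / (2 * B) > 0"
      using \<open>\<rho> > 0\<close> \<open>1 \<le> B\<close> by simp
  next
    fix e assume e: "0 < e \<and> e \<le> \<rho> / (2 * B)"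
    then have "2 * B * e \<le> \<rho>"
      using \<open>1 \<le> B\<close> by (simp add: field_simps)
    with e show "\<exists>r0>0. \<forall>r. 0 < r \<and> r \<le> r0 \<longrightarrow> (\<forall>n\<in>{N..K}. \<forall>s y y'. norm (y - X s) \<le> e \<longrightarrow> norm (y' - X s) \<le> e \<longrightarrow>
             norm (orbit (\<lambda>k x. f (x, Lam (s + real k * r))) y n - X (s + real n * r)) \<le> e \<and>
             norm (orbit (\<lambda>k x. f (x, Lam (s + real k * r))) y n - orbit (\<lambda>k x. f (x, Lam (s + real k * r))) y' n)
               \<le> 1/2 * norm (y - y'))"
      using \<open>0 < \<delta>\<close> \<open>\<delta> \<le> 1\<close> \<open>0 \<le> M\<close> \<open>real K * \<delta> * B \<le> 1/4\<close> unfolding B_def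
      by (intro orbit_estimates_for_small_shift[where L = "M + 1", OF linear norm_A \<open>0 \<le> M\<close> power lin drift
          X_uc Lam_uc]) auto
  qed
qed

lemma orbit_estimates_along_bounded_path:
  fixes f :: "(real^'l) \<times> (real^'m) \<Rightarrow> real^'l"
    and Lam :: "real \<Rightarrow> real^'m" and X :: "real \<Rightarrow> real^'l"
  assumes f_deriv: "\<And>z. (f has_derivative blinfun_apply (f' z)) (at z)"
    and f'_cont: "continuous_on UNIV f'"
    and fixed: "\<And>s. f (X s, Lam s) = X s"
    and X_uc: "uniformly_continuous_on UNIV X" and X_bounded: "bounded (range X)"
    and Lam_uc: "uniformly_continuous_on UNIV Lam" and Lam_bounded: "bounded (range Lam)"
    and power: "\<And>s n. N \<le> n \<Longrightarrow> onorm (Dx f' (X s) (Lam s) ^^ n) \<le> 1/4"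
  shows "\<exists>e0>0. \<forall>e. 0 < e \<and> e \<le> e0 \<longrightarrow>
           (\<exists>r0>0. \<forall>r. 0 < r \<and> r \<le> r0 \<longrightarrow> (\<forall>n\<in>{N..K}. \<forall>s y y'. norm (y - X s) \<le> e \<longrightarrow> norm (y' - X s) \<le> e \<longrightarrow>
             norm (orbit (\<lambda>k x. f (x, Lam (s + real k * r))) y n - X (s + real n * r)) \<le> e \<and>
             norm (orbit (\<lambda>k x. f (x, Lam (s + real k * r))) y n - orbit (\<lambda>k x. f (x, Lam (s + real k * r))) y' n)
               \<le> 1/2 * norm (y - y')))"
proof -
  define P where "P = range (\<lambda>s. (X s, Lam s))"
  have "P \<subseteq> range X \<times> range Lam"
    unfolding P_def by auto
  then have P: "bounded P"
    using bounded_Times[OF X_bounded Lam_bounded] bounded_subset by blast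
  have "bounded (f' ` closure P)"
    using P by (intro compact_imp_bounded compact_continuous_image continuous_on_subset[OF f'_cont]) auto
  then obtain M where M: "\<And>z. z \<in> closure P \<Longrightarrow> norm (f' z) \<le> M"
    unfolding bounded_iff by blast
  have path_in_P: "(X s, Lam s) \<in> P" for s
    by (simp add: P_def)
  have M_path: "norm (f' (X s, Lam s)) \<le> M" for s
    by (rule M[OF subsetD[OF closure_subset path_in_P]])
  have norm_A: "norm (Dx f' (X s) (Lam s) h) \<le> M * norm h" for s h
    using norm_Dx_le[of f' "X s" "Lam s" h] mult_right_mono[OF M_path[of s] norm_ge_zero[of h]] by linarith
  have "0 \<le> M"
    using M_path[of 0] norm_ge_zero[of "f' (X 0, Lam 0)"] by linarith
  have power_norm: "norm ((Dx f' (X s) (Lam s) ^^ n) h) \<le> 1/4 * norm h" if "N \<le> n" for s n h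
    using onorm[OF bounded_linear_funpow[OF bounded_linear_Dx[of f' "X s" "Lam s"], of n], of h]
      mult_right_mono[OF power[OF that, of s] norm_ge_zero[of h]] by linarith
  have linearization: "\<exists>\<rho>>0. \<forall>s l x x'. norm (l - Lam s) \<le> \<rho> \<longrightarrow> norm (x - X s) \<le> \<rho> \<longrightarrow> norm (x' - X s) \<le> \<rho> \<longrightarrow>
          norm (f (x, l) - f (x', l) - Dx f' (X s) (Lam s) (x - x')) \<le> \<delta> * norm (x - x')" if \<delta>: "\<delta> > 0" for \<delta>
  proof -
    obtain \<rho> where "\<rho> > 0" and lin: "\<And>x0 l0 l x x'. (x0, l0) \<in> P \<Longrightarrow> norm (l - l0) \<le> \<rho> \<Longrightarrow>
        norm (x - x0) \<le> \<rho> \<Longrightarrow> norm (x' - x0) \<le> \<rho> \<Longrightarrow>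
        norm (f (x, l) - f (x', l) - Dx f' x0 l0 (x - x')) \<le> \<delta> * norm (x - x')"
      using uniform_linearization_near_bounded[OF f_deriv f'_cont P \<delta>] by blast
    then show ?thesis
      using path_in_P by (intro exI[of _ \<rho>] conjI allI impI lin)
  qed
  have "continuous_on UNIV f"
    using f_deriv has_derivative_continuous continuous_at_imp_continuous_on by blast
  note drift = fixed_point_drift_near_bounded_path[OF this fixed P[unfolded P_def]]
  show ?thesis
    by (rule orbit_estimates_for_small_radius_and_shift[OF bounded_linear_Dx norm_A \<open>0 \<le> M\<close> power_norm
          linearization drift X_uc Lam_uc])
qed

section \<open>Graph transforms\<close>

lemma Fr_funpow:
  "(Fr f Lam r ^^ k) (s, y) = (s + real k * r, orbit (\<lambda>j x. f (x, Lam (s + real j * r))) y k)"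
  by (induction k) (auto simp: Fr_def algebra_simps)

lemma graph_transform_eq_orbit:
  "graph_transform f Lam r n u =
     (\<lambda>t. orbit (\<lambda>j x. f (x, Lam (t - real n * r + real j * r))) (u (t - real n * r)) n)"
  by (simp add: graph_transform_def Fr_funpow)

lemma fibrewise_map_in_Sspace:
  assumes u: "u \<in> Sspace eps X"
    and maps: "\<And>s y. norm (y - X s) \<le> eps \<Longrightarrow> norm (\<Phi> s y - X (s + c)) \<le> eps"
  shows "(\<lambda>t. \<Phi> (t - c) (u (t - c))) \<in> Sspace eps X"
  using maps[of "u (_ - c)" "_ - c"] u unfolding Sspace_def by simp

lemma sup_dist_fibrewise_map_le:
  assumes u: "u \<in> Sspace eps X" and u': "u' \<in> Sspace eps X"
    and contracts: "\<And>s y y'. norm (y - X s) \<le> eps \<Longrightarrow> norm (y' - X s) \<le> eps \<Longrightarrow>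
                      norm (\<Phi> s y - \<Phi> s y') \<le> 1/2 * norm (y - y')"
  shows "sup_dist (\<lambda>t. \<Phi> (t - c) (u (t - c))) (\<lambda>t. \<Phi> (t - c) (u' (t - c))) \<le> 1/2 * sup_dist u u'"
proof -
  have near: "norm (u s - X s) \<le> eps" "norm (u' s - X s) \<le> eps" for s
    using u u' unfolding Sspace_def by auto
  have "norm (u s - u' s) \<le> 2 * eps" for s
  proof -
    have "norm (X s - u' s) \<le> eps"
      using near(2) by (simp add: norm_minus_commute)
    from norm_diff_triangle_le[OF near(1) this] show ?thesis
      by simp
  qed
  then have "bdd_above (range (\<lambda>s. norm (u s - u' s)))"
    by (rule bdd_aboveI2)
  then have "norm (u s - u' s) \<le> sup_dist u u'" for s
    unfolding sup_dist_def by (rule cSUP_upper[OF UNIV_I])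
  then have "norm (\<Phi> (t - c) (u (t - c)) - \<Phi> (t - c) (u' (t - c))) \<le> 1/2 * sup_dist u u'" for t
    using contracts[OF near] by (meson mult_left_mono order_trans zero_le_divide_1_iff zero_le_numeral)
  then show ?thesis
    unfolding sup_dist_def[of "\<lambda>t. \<Phi> (t - c) (u (t - c))"] by (intro cSUP_least) auto
qed

lemma graph_transform_contraction_for_small_shift:
  assumes "\<exists>r0>0. \<forall>r. 0 < r \<and> r \<le> r0 \<longrightarrow> (\<forall>n\<in>I. \<forall>s y y'. norm (y - X s) \<le> eps \<longrightarrow> norm (y' - X s) \<le> eps \<longrightarrow>
             norm (orbit (\<lambda>k x. f (x, Lam (s + real k * r))) y n - X (s + real n * r)) \<le> eps \<and>
             norm (orbit (\<lambda>k x. f (x, Lam (s + real k * r))) y n - orbit (\<lambda>k x. f (x, Lam (s + real k * r))) y' n)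
               \<le> 1/2 * norm (y - y'))"
  shows "\<exists>r0>0. \<forall>r. 0 < r \<and> r \<le> r0 \<longrightarrow> (\<forall>n\<in>I.
           (\<forall>u \<in> Sspace eps X. graph_transform f Lam r n u \<in> Sspace eps X)
         \<and> (\<forall>u \<in> Sspace eps X. \<forall>u' \<in> Sspace eps X.
              sup_dist (graph_transform f Lam r n u) (graph_transform f Lam r n u') \<le> 1/2 * sup_dist u u'))"
proof -
  obtain r0 where "0 < r0" and r0: "\<forall>r. 0 < r \<and> r \<le> r0 \<longrightarrow> (\<forall>n\<in>I. \<forall>s y y'.
      norm (y - X s) \<le> eps \<longrightarrow> norm (y' - X s) \<le> eps \<longrightarrow>
      norm (orbit (\<lambda>k x. f (x, Lam (s + real k * r))) y n - X (s + real n * r)) \<le> eps \<and>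
      norm (orbit (\<lambda>k x. f (x, Lam (s + real k * r))) y n - orbit (\<lambda>k x. f (x, Lam (s + real k * r))) y' n)
        \<le> 1/2 * norm (y - y'))"
    using assms by blast
  show ?thesis
  proof (rule exI[of _ r0], intro conjI[OF \<open>0 < r0\<close>] allI impI ballI)
    fix r n assume r: "0 < r \<and> r \<le> r0" and n: "n \<in> I"
    define \<Phi> where "\<Phi> s y = orbit (\<lambda>k x. f (x, Lam (s + real k * r))) y n" for s y
    have graph_transform: "graph_transform f Lam r n u = (\<lambda>t. \<Phi> (t - real n * r) (u (t - real n * r)))" for u
      unfolding graph_transform_eq_orbit \<Phi>_def ..
    have maps: "norm (\<Phi> s y - X (s + real n * r)) \<le> eps" if "norm (y - X s) \<le> eps" for s y
      using r0[rule_format, OF r n that that] unfolding \<Phi>_def by blast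
    have contracts: "norm (\<Phi> s y - \<Phi> s y') \<le> 1/2 * norm (y - y')"
      if "norm (y - X s) \<le> eps" "norm (y' - X s) \<le> eps" for s y y'
      using r0[rule_format, OF r n that] unfolding \<Phi>_def by blast
    show "(\<forall>u \<in> Sspace eps X. graph_transform f Lam r n u \<in> Sspace eps X)
        \<and> (\<forall>u \<in> Sspace eps X. \<forall>u' \<in> Sspace eps X.
             sup_dist (graph_transform f Lam r n u) (graph_transform f Lam r n u') \<le> 1/2 * sup_dist u u')"
      unfolding graph_transform
      using fibrewise_map_in_Sspace[where \<Phi> = \<Phi> and c = "real n * r", OF _ maps]
        sup_dist_fibrewise_map_le[where \<Phi> = \<Phi> and c = "real n * r", OF _ _ contracts] by blast
  qed
qed

theorem mainTheorem15:
  fixes f :: "(real^'l) \<times> (real^'m) \<Rightarrow> real^'l"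
    and f' :: "(real^'l) \<times> (real^'m) \<Rightarrow> ((real^'l) \<times> (real^'m)) \<Rightarrow>\<^sub>L (real^'l)"
    and Lam :: "real \<Rightarrow> real^'m" and lm lp :: "real^'m"
    and X :: "real \<Rightarrow> real^'l" and N :: nat
  assumes f_deriv: "\<And>z. (f has_derivative blinfun_apply (f' z)) (at z)"
    and f'_cont: "continuous_on UNIV f'"
    and shift: "parameter_shift Lam lm lp"
    and stable: "stable_path f f' Lam lm lp X"
    and N_bound: "\<And>s n. n \<ge> N \<Longrightarrow> onorm (Dx f' (X s) (Lam s) ^^ n) < 1/4"
  shows "\<exists>eps0>0. \<forall>eps. 0 < eps \<and> eps \<le> eps0 \<longrightarrow>
           (\<exists>r0>0. \<forall>r. 0 < r \<and> r \<le> r0 \<longrightarrow>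
              (\<forall>n \<in> {N..N*(N+1)}.
                 (\<forall>u \<in> Sspace eps X. graph_transform f Lam r n u \<in> Sspace eps X)
               \<and> (\<forall>u \<in> Sspace eps X. \<forall>u' \<in> Sspace eps X.
                    sup_dist (graph_transform f Lam r n u) (graph_transform f Lam r n u')
                      \<le> 1/2 * sup_dist u u')))"
proof -
  have "onorm (Dx f' (X s) (Lam s) ^^ N) < 1" for s
    by (rule order.strict_trans[OF N_bound[OF order_refl]]) simp
  note regular = stable_path_uniformly_continuous_bounded[OF f_deriv f'_cont shift stable this]
  have fixed: "\<And>s. f (X s, Lam s) = X s"
    using stable by (simp add: stable_path_def)
  have "onorm (Dx f' (X s) (Lam s) ^^ n) \<le> 1/4" if "N \<le> n" for s n
    using less_imp_le[OF N_bound[OF that]] by simp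
  from orbit_estimates_along_bounded_path[OF f_deriv f'_cont fixed regular this, where K = "N * (N + 1)"]
  obtain eps0 where "0 < eps0" and estimates: "\<forall>eps. 0 < eps \<and> eps \<le> eps0 \<longrightarrow>
      (\<exists>r0>0. \<forall>r. 0 < r \<and> r \<le> r0 \<longrightarrow> (\<forall>n\<in>{N..N * (N + 1)}. \<forall>s y y'. norm (y - X s) \<le> eps \<longrightarrow> norm (y' - X s) \<le> eps \<longrightarrow>
        norm (orbit (\<lambda>k x. f (x, Lam (s + real k * r))) y n - X (s + real n * r)) \<le> eps \<and>
        norm (orbit (\<lambda>k x. f (x, Lam (s + real k * r))) y n - orbit (\<lambda>k x. f (x, Lam (s + real k * r))) y' n)
          \<le> 1/2 * norm (y - y')))"
    by blast
  show ?thesis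
    by (rule exI[of _ eps0], intro conjI[OF \<open>0 < eps0\<close>] allI impI,
        rule graph_transform_contraction_for_small_shift, rule estimates[rule_format])
qed

end
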